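(* Let $n\ge 1$, $t_1<\dots<t_{n+1}$, let $\varphi_0,\dots,\varphi_{n+2}$ be the natural basis and $\mathbf{C}=[c_{k,l}]_{k,l=1}^{n+3}$ with $c_{k,l}=\int_{t_1}^{t_{n+1}}\varphi_{k-1}''(t)\varphi_{l-1}''(t)\,dt$. Then: (i) $\mathbf{C}$ is symmetric and non-negative definite; (ii) for $u_1,u_{n+1}\in\mathbb{R}$ and $\boldsymbol{p}\in\mathbb{R}^{n+1}$, $(u_1,\boldsymbol{p}^T,u_{n+1})\mathbf{C}(u_1,\boldsymbol{p}^T,u_{n+1})^T=0$ if and only if $u_1=u_{n+1}=0$ and $\boldsymbol{p}$ belongs to the range $R(\mathbf{L})$ of the $(n+1)\times 2$ matrix $\mathbf{L}$ whose $i$-th row is $(1,t_i)$; (iii) $c_{1,j+1}=c_{n+3,j+1}=0$ for all $j=1,\dots,n+1$ (so, by symmetry, $\mathbf{C}$ has the block form with $c_{1,1},c_{1,n+3},c_{n+3,1},c_{n+3,n+3}$ in the corners, the middle block $\mathbf{C}(2,n+2)=[c_{ij}:i,j=2,\dots,n+2]$, and zeros elsewhere); (iv) the $2\times2$ matrix $\begin{pmatrix}c_{1,1}&c_{1,n+3}\\ c_{n+3,1}&c_{n+3,n+3}\end{pmatrix}$ is symmetric positive definite; (v) the null space of $\mathbf{C}(2,n+2)$ equals $R(\mathbf{L})$; (vi) for $s=u_1\varphi_0+\sum_{j=1}^{n+1}p_j\varphi_j+u_{n+1}\varphi_{n+2}$, $$\int_{t_1}^{t_{n+1}}|s''(t)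|^2dt=u_1^2c_{1,1}+u_{n+1}^2c_{n+3,n+3}+2c_{1,n+3}u_1u_{n+1}+\boldsymbol{p}^T\mathbf{C}(2,n+2)\boldsymbol{p}.$$
   Context: $S_3\cap C^2$ is the set of $C^2$ functions on $[t_1,t_{n+1}]$ that are cubic polynomials on each $[t_i,t_{i+1}]$. The natural basis is defined as follows: $\varphi_0$ is the unique element of $S_3\cap C^2$ with $\varphi_0(t_i)=0$ for all $i$, $\varphi_0''(t_1)=1$, $\varphi_0''(t_{n+1})=0$; for $j=1,\dots,n+1$, $\varphi_j$ is the unique element of $S_3\cap C^2$ with $\varphi_j(t_i)=\delta_{ij}$ for all $i$ and $\varphi_j''(t_1)=\varphi_j''(t_{n+1})=0$; $\varphi_{n+2}$ is the unique element of $S_3\cap C^2$ with $\varphi_{n+2}(t_i)=0$ for all $i$, $\varphi_{n+2}''(t_1)=0$, $\varphi_{n+2}''(t_{n+1})=1$. Every $s\in S_3\cap C^2$ equals $u_1\varphi_0+\sum_j p_j\varphi_j+u_{n+1}\varphi_{n+2}$ with $p_j=s(t_j)$, $u_1=s''(t_1)$, $u_{n+1}=s''(t_{n+1})$. *)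

theory Defs
  imports "HOL-Analysis.Analysis" "HOL-Computational_Algebra.Polynomial"
begin

definition has_second_deriv_on :: "real \<Rightarrow> real \<Rightarrow> (real \<Rightarrow> real) \<Rightarrow> (real \<Rightarrow> real) \<Rightarrow> bool" where
  "has_second_deriv_on a b s s2 \<longleftrightarrow>
     (\<exists>s1. \<forall>x\<in>{a..b}. (s has_real_derivative s1 x) (at x within {a..b}) \<and>
                        (s1 has_real_derivative s2 x) (at x within {a..b}))"

definition C2_on :: "real \<Rightarrow> real \<Rightarrow> (real \<Rightarrow> real) \<Rightarrow> bool" where
  "C2_on a b s \<longleftrightarrow> (\<exists>s2. has_second_deriv_on a b s s2 \<and> continuous_on {a..b} s2)"

definition cubic_spline_C2 :: "nat \<Rightarrow> (nat \<Rightarrow> real) \<Rightarrow> (real \<Rightarrow> real) \<Rightarrow> bool" where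
  "cubic_spline_C2 n t s \<longleftrightarrow>
     C2_on (t 1) (t (n+1)) s \<and>
     (\<forall>i\<in>{1..n}. \<exists>q :: real poly. degree q \<le> 3 \<and> (\<forall>x\<in>{t i..t (Suc i)}. s x = poly q x))"

end

theory Submission
  imports Defs
begin

text \<open>
  The matrix C is the Gram matrix of the second derivatives, so the quadratic form it defines
  is s \<mapsto> \<integral>|s''|^2 for the corresponding spline s. Hence C is symmetric and
  non-negative definite, and the form vanishes exactly when s'' = 0 on [t_1, t_(n+1)], i.e. when
  s is affine; as u_1 = s''(t_1) and u_(n+1) = s''(t_(n+1)) this means u_1 = u_(n+1) = 0 and
  p interpolates an affine function.
  Everything else rests on one integration by parts: if f vanishes at all knots and g is affine
  on every knot interval with g(t_1) = g(t_(n+1)) = 0, then \<integral> f'' g = 0, because on each piece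
  the integral is [f' g - f g'] and these boundary terms telescope. With f = \<phi>_0, \<phi>_(n+2) and
  g = \<phi>_j'' this gives the zero blocks of C; with f = s - (a + b x) for a spline s interpolating
  affine data it shows that the middle block annihilates such data.
\<close>

lemma has_real_derivative_closed_interval_unique:
  fixes a b x :: real
  assumes "a < b" "x \<in> {a..b}"
    and "(f has_real_derivative d1) (at x within {a..b})"
    and "(f has_real_derivative d2) (at x within {a..b})"
  shows "d1 = d2"
  using vector_derivative_unique_within_closed_interval[of a b x f d1 d2] assms
  by (simp add: has_real_derivative_iff_has_vector_derivative)

lemma has_real_derivative_transform_on:
  assumes "(f has_real_derivative d) (at x within S)" "x \<in> S" "\<And>y. y \<in> S \<Longrightarrow> f y = g y"
  shows "(g has_real_derivative d) (at x within S)"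
  using has_field_derivative_transform_within[OF assms(1) zero_less_one assms(2)] assms(3) by blast

lemma has_second_deriv_onE:
  assumes "has_second_deriv_on a b f f2"
  obtains f1 where
    "\<And>x. x \<in> {a..b} \<Longrightarrow> (f has_real_derivative f1 x) (at x within {a..b})"
    "\<And>x. x \<in> {a..b} \<Longrightarrow> (f1 has_real_derivative f2 x) (at x within {a..b})"
  using assms unfolding has_second_deriv_on_def by blast

lemma has_second_deriv_on_unique:
  assumes "a < b" "has_second_deriv_on a b f f2" "has_second_deriv_on a b g g2"
    and "\<And>x. x \<in> {a..b} \<Longrightarrow> f x = g x" "x \<in> {a..b}"
  shows "f2 x = g2 x"
proof -
  obtain f1 where f: "\<And>x. x \<in> {a..b} \<Longrightarrow> (f has_real_derivative f1 x) (at x within {a..b})"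
    and f1: "\<And>x. x \<in> {a..b} \<Longrightarrow> (f1 has_real_derivative f2 x) (at x within {a..b})"
    using assms(2) by (metis has_second_deriv_onE)
  obtain g1 where g: "\<And>x. x \<in> {a..b} \<Longrightarrow> (g has_real_derivative g1 x) (at x within {a..b})"
    and g1: "\<And>x. x \<in> {a..b} \<Longrightarrow> (g1 has_real_derivative g2 x) (at x within {a..b})"
    using assms(3) by (metis has_second_deriv_onE)
  have first: "f1 y = g1 y" if "y \<in> {a..b}" for y
    using has_real_derivative_closed_interval_unique[OF assms(1) that
        has_real_derivative_transform_on[OF f[OF that] that assms(4)] g[OF that]] .
  show ?thesis
    using has_real_derivative_closed_interval_unique[OF assms(1,5)
        has_real_derivative_transform_on[OF f1[OF assms(5)] assms(5) first] g1[OF assms(5)]] .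
qed

lemma has_second_deriv_on_subinterval:
  assumes "has_second_deriv_on a b f f2" "{c..d} \<subseteq> {a..b}"
  shows "has_second_deriv_on c d f f2"
  using assms unfolding has_second_deriv_on_def by (meson DERIV_subset subsetD)

lemma has_second_deriv_on_add:
  assumes "has_second_deriv_on a b f f2" "has_second_deriv_on a b g g2"
  shows "has_second_deriv_on a b (\<lambda>x. f x + g x) (\<lambda>x. f2 x + g2 x)"
proof -
  obtain f1 where "\<And>x. x \<in> {a..b} \<Longrightarrow> (f has_real_derivative f1 x) (at x within {a..b})"
    "\<And>x. x \<in> {a..b} \<Longrightarrow> (f1 has_real_derivative f2 x) (at x within {a..b})"
    using assms(1) by (metis has_second_deriv_onE)
  moreover obtain g1 where "\<And>x. x \<in> {a..b} \<Longrightarrow> (g has_real_derivative g1 x) (at x within {a..b})"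
    "\<And>x. x \<in> {a..b} \<Longrightarrow> (g1 has_real_derivative g2 x) (at x within {a..b})"
    using assms(2) by (metis has_second_deriv_onE)
  ultimately show ?thesis
    unfolding has_second_deriv_on_def by (intro exI[of _ "\<lambda>x. f1 x + g1 x"]) (auto intro: DERIV_add)
qed

lemma has_second_deriv_on_cmult:
  assumes "has_second_deriv_on a b f f2"
  shows "has_second_deriv_on a b (\<lambda>x. u * f x) (\<lambda>x. u * f2 x)"
proof -
  obtain f1 where "\<And>x. x \<in> {a..b} \<Longrightarrow> (f has_real_derivative f1 x) (at x within {a..b})"
    "\<And>x. x \<in> {a..b} \<Longrightarrow> (f1 has_real_derivative f2 x) (at x within {a..b})"
    using assms by (metis has_second_deriv_onE)
  then show ?thesis
    unfolding has_second_deriv_on_def by (intro exI[of _ "\<lambda>x. u * f1 x"]) (auto intro: DERIV_cmult)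
qed

lemma has_second_deriv_on_diff:
  assumes "has_second_deriv_on a b f f2" "has_second_deriv_on a b g g2"
  shows "has_second_deriv_on a b (\<lambda>x. f x - g x) (\<lambda>x. f2 x - g2 x)"
  using has_second_deriv_on_add[OF assms(1) has_second_deriv_on_cmult[OF assms(2), of "-1"]] by simp

lemma has_second_deriv_on_sum:
  assumes "finite K" "\<And>k. k \<in> K \<Longrightarrow> has_second_deriv_on a b (f k) (f2 k)"
  shows "has_second_deriv_on a b (\<lambda>x. \<Sum>k\<in>K. u k * f k x) (\<lambda>x. \<Sum>k\<in>K. u k * f2 k x)"
  using assms
proof (induction K rule: finite_induct)
  case empty
  show ?case
    unfolding has_second_deriv_on_def by (intro exI[of _ "\<lambda>x. 0"]) (auto intro: DERIV_const)
next
  case (insert k K)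
  then show ?case using has_second_deriv_on_add[OF has_second_deriv_on_cmult] by simp
qed

lemma has_second_deriv_on_affine: "has_second_deriv_on a b (\<lambda>x. \<alpha> + \<beta> * x) (\<lambda>x. 0)"
  unfolding has_second_deriv_on_def
  by (intro exI[of _ "\<lambda>x. \<beta>"]) (auto intro!: derivative_eq_intros)

lemma has_second_deriv_on_poly:
  "has_second_deriv_on a b (poly q) (poly (pderiv (pderiv q)))"
  unfolding has_second_deriv_on_def
  by (intro exI[of _ "poly (pderiv q)"]) (auto intro: poly_DERIV has_field_derivative_at_within)

lemma has_second_deriv_on_zero_imp_affine:
  assumes "has_second_deriv_on a b f f2" "\<And>x. x \<in> {a..b} \<Longrightarrow> f2 x = 0"
  shows "\<exists>\<alpha> \<beta>. \<forall>x\<in>{a..b}. f x = \<alpha> + \<beta> * x"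
proof -
  obtain f1 where f: "\<And>x. x \<in> {a..b} \<Longrightarrow> (f has_real_derivative f1 x) (at x within {a..b})"
    and f1: "\<And>x. x \<in> {a..b} \<Longrightarrow> (f1 has_real_derivative f2 x) (at x within {a..b})"
    using assms(1) by (metis has_second_deriv_onE)
  obtain \<beta> where \<beta>: "\<forall>x\<in>{a..b}. f1 x = \<beta>"
    using has_field_derivative_zero_constant[of "{a..b}" f1] f1 assms(2) by force
  have "\<exists>\<alpha>. \<forall>x\<in>{a..b}. f x - \<beta> * x = \<alpha>"
  proof (rule has_field_derivative_zero_constant)
    fix x assume x: "x \<in> {a..b}"
    have "((\<lambda>x. f x - \<beta> * x) has_real_derivative f1 x - \<beta> * 1) (at x within {a..b})"
      using DERIV_diff[OF f[OF x] DERIV_cmult[OF DERIV_ident]] .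
    then show "((\<lambda>x. f x - \<beta> * x) has_real_derivative 0) (at x within {a..b})"
      using \<beta> x by simp
  qed simp
  then show ?thesis by (metis diff_eq_eq add.commute)
qed

lemma has_integral_second_deriv_mult_affine:
  fixes f f1 f2 g :: "real \<Rightarrow> real"
  assumes "a \<le> b"
    and f: "\<And>x. x \<in> {a..b} \<Longrightarrow> (f has_real_derivative f1 x) (at x within {a..b})"
    and f1: "\<And>x. x \<in> {a..b} \<Longrightarrow> (f1 has_real_derivative f2 x) (at x within {a..b})"
    and g: "\<And>x. x \<in> {a..b} \<Longrightarrow> (g has_real_derivative k) (at x within {a..b})"
  shows "((\<lambda>x. f2 x * g x) has_integral (f1 b * g b - k * f b) - (f1 a * g a - k * f a)) {a..b}"
proof -
  have deriv: "((\<lambda>x. f1 x * g x - k * f x) has_vector_derivative f2 x * g x) (at x within {a..b})"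
    if "x \<in> {a..b}" for x
  proof -
    have "((\<lambda>x. f1 x * g x - k * f x) has_real_derivative f2 x * g x + k * f1 x - k * f1 x)
        (at x within {a..b})"
      using f1[OF that] g[OF that] f[OF that] by (intro derivative_intros DERIV_mult[THEN DERIV_cong]) auto
    then show ?thesis by (simp add: has_real_derivative_iff_has_vector_derivative)
  qed
  from fundamental_theorem_of_calculus[OF \<open>a \<le> b\<close> deriv] show ?thesis by simp
qed

lemma integral_square_of_sum:
  fixes e :: "'k \<Rightarrow> real \<Rightarrow> real"
  assumes "finite K" "\<And>k. k \<in> K \<Longrightarrow> continuous_on {a..b} (e k)"
  shows "integral {a..b} (\<lambda>x. (\<Sum>k\<in>K. v k * e k x)\<^sup>2) =
         (\<Sum>k\<in>K. \<Sum>l\<in>K. v k * integral {a..b} (\<lambda>x. e k x * e l x) * v l)"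
proof -
  have int: "(\<lambda>x. w * (e k x * e l x)) integrable_on {a..b}" if "k \<in> K" "l \<in> K" for k l w
    using assms(2) that
    by (intro integrable_on_cmult_left integrable_continuous_interval continuous_on_mult) auto
  have "(\<Sum>k\<in>K. v k * e k x)\<^sup>2 = (\<Sum>k\<in>K. \<Sum>l\<in>K. (v k * v l) * (e k x * e l x))" for x
    by (simp add: power2_eq_square sum_product algebra_simps)
  then have "integral {a..b} (\<lambda>x. (\<Sum>k\<in>K. v k * e k x)\<^sup>2) =
        (\<Sum>k\<in>K. \<Sum>l\<in>K. integral {a..b} (\<lambda>x. (v k * v l) * (e k x * e l x)))"
    using assms(1) int by (simp add: integral_sum integrable_sum)
  also have "\<dots> = (\<Sum>k\<in>K. \<Sum>l\<in>K. v k * integral {a..b} (\<lambda>x. e k x * e l x) * v l)"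
    by (simp add: algebra_simps)
  finally show ?thesis .
qed

lemma continuous_integral_square_eq_0:
  fixes h :: "real \<Rightarrow> real"
  assumes "a < b" "continuous_on {a..b} h" "integral {a..b} (\<lambda>x. (h x)\<^sup>2) = 0" "x \<in> {a..b}"
  shows "h x = 0"
  using integral_eq_0_iff[of a b "\<lambda>x. (h x)\<^sup>2"] assms by (simp add: continuous_intros)

definition piecewise_affine :: "nat \<Rightarrow> (nat \<Rightarrow> real) \<Rightarrow> (real \<Rightarrow> real) \<Rightarrow> bool" where
  "piecewise_affine n t g \<longleftrightarrow>
     (\<forall>i\<in>{1..n}. \<exists>k. \<forall>x\<in>{t i..t (Suc i)}. (g has_real_derivative k) (at x within {t i..t (Suc i)}))"

lemma piecewise_affine_add:
  "piecewise_affine n t f \<Longrightarrow> piecewise_affine n t g \<Longrightarrow> piecewise_affine n t (\<lambda>x. f x + g x)"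
  unfolding piecewise_affine_def by (metis DERIV_add)

lemma piecewise_affine_cmult: "piecewise_affine n t f \<Longrightarrow> piecewise_affine n t (\<lambda>x. u * f x)"
  unfolding piecewise_affine_def by (metis DERIV_cmult)

lemma piecewise_affine_sum:
  assumes "finite K" "\<And>k. k \<in> K \<Longrightarrow> piecewise_affine n t (g k)"
  shows "piecewise_affine n t (\<lambda>x. \<Sum>k\<in>K. u k * g k x)"
  using assms
proof (induction K rule: finite_induct)
  case empty
  show ?case unfolding piecewise_affine_def by (auto intro: DERIV_const)
next
  case (insert k K)
  then show ?case using piecewise_affine_add[OF piecewise_affine_cmult] by simp
qed

lemma knots_mono:
  fixes t :: "nat \<Rightarrow> real"
  assumes "\<forall>i\<in>{1..n}. t i < t (Suc i)" "1 \<le> i" "i \<le> j" "j \<le> n + 1"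
  shows "t i \<le> t j"
  using assms(3,4)
proof (induction j rule: dec_induct)
  case (step k)
  then have "t k < t (Suc k)" using assms(1,2) by auto
  with step show ?case by simp
qed simp

lemma knot_interval_subset:
  fixes t :: "nat \<Rightarrow> real"
  assumes "\<forall>i\<in>{1..n}. t i < t (Suc i)" "i \<in> {1..n}"
  shows "{t i..t (Suc i)} \<subseteq> {t 1..t (n+1)}"
  using knots_mono[OF assms(1), of 1 i] knots_mono[OF assms(1), of "Suc i" "n+1"] assms(2) by auto

lemma cubic_spline_second_deriv_piecewise_affine:
  assumes t_incr: "\<forall>i\<in>{1..n}. t i < t (Suc i)"
    and spl: "cubic_spline_C2 n t g" and g2: "has_second_deriv_on (t 1) (t (n+1)) g g2"
  shows "piecewise_affine n t g2"
  unfolding piecewise_affine_def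
proof
  fix i assume i: "i \<in> {1..n}"
  let ?P = "{t i..t (Suc i)}"
  obtain q :: "real poly" where q: "degree q \<le> 3" "\<forall>x\<in>?P. g x = poly q x"
    using spl i unfolding cubic_spline_C2_def by blast
  have on_piece: "has_second_deriv_on (t i) (t (Suc i)) g g2"
    using has_second_deriv_on_subinterval[OF g2 knot_interval_subset[OF t_incr i]] .
  have g2_poly: "g2 x = poly (pderiv (pderiv q)) x" if "x \<in> ?P" for x
    using has_second_deriv_on_unique[OF _ on_piece has_second_deriv_on_poly _ that] q(2) t_incr i
    by auto
  have "degree (pderiv (pderiv (pderiv q))) = 0"
    using q(1) by (simp add: degree_pderiv)
  then obtain k where k: "pderiv (pderiv (pderiv q)) = [:k:]"
    by (metis degree_eq_zeroE)
  have "(g2 has_real_derivative k) (at x within ?P)" if x: "x \<in> ?P" for x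
    using has_real_derivative_transform_on[OF
        has_field_derivative_at_within[OF poly_DERIV[of "pderiv (pderiv q)" x]] x] g2_poly k
    by simp
  then show "\<exists>k. \<forall>x\<in>?P. (g2 has_real_derivative k) (at x within ?P)" by blast
qed

lemma has_integral_second_deriv_mult_knot_interval:
  assumes t_incr: "\<forall>i\<in>{1..n}. t i < t (Suc i)"
    and f: "\<And>x. x \<in> {t 1..t (n+1)} \<Longrightarrow> (f has_real_derivative f1 x) (at x within {t 1..t (n+1)})"
    and f1: "\<And>x. x \<in> {t 1..t (n+1)} \<Longrightarrow> (f1 has_real_derivative f2 x) (at x within {t 1..t (n+1)})"
    and f_knots: "\<forall>i\<in>{1..n+1}. f (t i) = 0"
    and g: "piecewise_affine n t g" and i: "i \<in> {1..n}"
  shows "((\<lambda>x. f2 x * g x) has_integral f1 (t (Suc i)) * g (t (Suc i)) - f1 (t i) * g (t i))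
           {t i..t (Suc i)}"
proof -
  let ?P = "{t i..t (Suc i)}"
  obtain k where k: "\<And>x. x \<in> ?P \<Longrightarrow> (g has_real_derivative k) (at x within ?P)"
    using g i unfolding piecewise_affine_def by blast
  have le: "t i \<le> t (Suc i)" using t_incr i by (simp add: less_imp_le)
  have fP: "(f has_real_derivative f1 x) (at x within ?P)" "(f1 has_real_derivative f2 x) (at x within ?P)"
    if "x \<in> ?P" for x
    using f f1 that knot_interval_subset[OF t_incr i] by (blast intro: DERIV_subset)+
  have "((\<lambda>x. f2 x * g x) has_integral
      (f1 (t (Suc i)) * g (t (Suc i)) - k * f (t (Suc i))) - (f1 (t i) * g (t i) - k * f (t i))) ?P"
    by (rule has_integral_second_deriv_mult_affine[OF le fP k])
  then show ?thesis using f_knots i by simp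
qed

lemma has_integral_second_deriv_mult_piecewise_affine:
  assumes t_incr: "\<forall>i\<in>{1..n}. t i < t (Suc i)"
    and f2: "has_second_deriv_on (t 1) (t (n+1)) f f2"
    and f_knots: "\<forall>i\<in>{1..n+1}. f (t i) = 0"
    and g: "piecewise_affine n t g" "g (t 1) = 0" "g (t (n+1)) = 0"
  shows "((\<lambda>x. f2 x * g x) has_integral 0) {t 1..t (n+1)}"
proof -
  obtain f1 where
    f: "\<And>x. x \<in> {t 1..t (n+1)} \<Longrightarrow> (f has_real_derivative f1 x) (at x within {t 1..t (n+1)})" and
    f1: "\<And>x. x \<in> {t 1..t (n+1)} \<Longrightarrow> (f1 has_real_derivative f2 x) (at x within {t 1..t (n+1)})"
    using f2 by (metis has_second_deriv_onE)
  have "((\<lambda>x. f2 x * g x) has_integral f1 (t (Suc m)) * g (t (Suc m)) - f1 (t 1) * g (t 1))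
          {t 1..t (Suc m)}" if "m \<le> n" for m
    using that
  proof (induction m)
    case 0
    show ?case using has_integral_refl(2)[of "\<lambda>x. f2 x * g x" "t 1"] by simp
  next
    case (Suc m)
    have "t 1 \<le> t (Suc m)" "t (Suc m) \<le> t (Suc (Suc m))"
      using knots_mono[OF t_incr] Suc.prems by auto
    moreover have "((\<lambda>x. f2 x * g x) has_integral
        f1 (t (Suc m)) * g (t (Suc m)) - f1 (t 1) * g (t 1)) {t 1..t (Suc m)}"
      using Suc by simp
    ultimately have "((\<lambda>x. f2 x * g x) has_integral
        (f1 (t (Suc m)) * g (t (Suc m)) - f1 (t 1) * g (t 1)) +
        (f1 (t (Suc (Suc m))) * g (t (Suc (Suc m))) - f1 (t (Suc m)) * g (t (Suc m))))
        {t 1..t (Suc (Suc m))}"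
      using has_integral_second_deriv_mult_knot_interval[OF t_incr f f1 f_knots g(1), of "Suc m"] Suc.prems
      by (intro has_integral_combine) auto
    then show ?case by simp
  qed
  from this[of n] show ?thesis using g(2,3) by simp
qed

definition bordered :: "nat \<Rightarrow> real \<Rightarrow> real \<Rightarrow> (nat \<Rightarrow> real) \<Rightarrow> nat \<Rightarrow> real" where
  "bordered n u v p k = (if k = 1 then u else if k = n+3 then v else p (k-1))"

lemma sum_bordered:
  "(\<Sum>k=1..n+3. bordered n u v p k * G k) = u * G 1 + (\<Sum>j=1..n+1. p j * G (j+1)) + v * G (n+3)"
proof -
  let ?W = "\<lambda>k. bordered n u v p k * G k"
  have "(\<Sum>k=1..n+3. ?W k) = ?W 1 + (\<Sum>k=Suc 1..Suc (n+1). ?W k) + ?W (n+3)"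
    by (simp add: sum.atLeast_Suc_atMost numeral_3_eq_3)
  also have "(\<Sum>k=Suc 1..Suc (n+1). ?W k) = (\<Sum>j=1..n+1. p j * G (j+1))"
    unfolding sum.shift_bounds_cl_Suc_ivl by (rule sum.cong) (auto simp: bordered_def)
  finally show ?thesis by (simp add: bordered_def)
qed

lemma bordered_quadratic_form_block:
  fixes c :: "nat \<Rightarrow> nat \<Rightarrow> real"
  assumes zero: "\<forall>j\<in>{1..n+1}. c 1 (j+1) = 0 \<and> c (n+3) (j+1) = 0 \<and> c (j+1) 1 = 0 \<and> c (j+1) (n+3) = 0"
    and sym: "c (n+3) 1 = c 1 (n+3)"
  shows "(\<Sum>k=1..n+3. \<Sum>l=1..n+3. bordered n u v p k * c k l * bordered n u v p l) =
     u\<^sup>2 * c 1 1 + v\<^sup>2 * c (n+3) (n+3) + 2 * c 1 (n+3) * u * v +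
     (\<Sum>i=1..n+1. \<Sum>j=1..n+1. p i * c (i+1) (j+1) * p j)"
proof -
  let ?w = "bordered n u v p"
  have row: "(\<Sum>l=1..n+3. ?w k * c k l * ?w l) = ?w k * (\<Sum>l=1..n+3. ?w l * c k l)" for k
    by (simp add: sum_distrib_left algebra_simps)
  have "(\<Sum>k=1..n+3. \<Sum>l=1..n+3. ?w k * c k l * ?w l) =
        (\<Sum>k=1..n+3. ?w k * (u * c k 1 + (\<Sum>j=1..n+1. p j * c k (j+1)) + v * c k (n+3)))"
    unfolding row sum_bordered ..
  also have "\<dots> = u * (u * c 1 1 + v * c 1 (n+3))
     + (\<Sum>i=1..n+1. \<Sum>j=1..n+1. p i * c (i+1) (j+1) * p j)
     + v * (u * c (n+3) 1 + v * c (n+3) (n+3))"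
    unfolding sum_bordered using zero
    by (simp add: sum_distrib_left algebra_simps sum.distrib)
  finally show ?thesis using sym by (simp add: power2_eq_square algebra_simps)
qed

locale natural_spline_basis =
  fixes n :: nat and t :: "nat \<Rightarrow> real"
    and \<phi> :: "nat \<Rightarrow> real \<Rightarrow> real" and \<phi>2 :: "nat \<Rightarrow> real \<Rightarrow> real"
    and c :: "nat \<Rightarrow> nat \<Rightarrow> real"
  assumes n_pos: "n \<ge> 1"
    and t_incr: "\<forall>i\<in>{1..n}. t i < t (Suc i)"
    and spl: "\<forall>k\<le>n+2. cubic_spline_C2 n t (\<phi> k)"
    and d2: "\<forall>k\<le>n+2. has_second_deriv_on (t 1) (t (n+1)) (\<phi> k) (\<phi>2 k)"
    and phi0: "(\<forall>i\<in>{1..n+1}. \<phi> 0 (t i) = 0) \<and> \<phi>2 0 (t 1) = 1 \<and> \<phi>2 0 (t (n+1)) = 0"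
    and phij: "\<forall>j\<in>{1..n+1}. (\<forall>i\<in>{1..n+1}. \<phi> j (t i) = (if i = j then 1 else 0))
                 \<and> \<phi>2 j (t 1) = 0 \<and> \<phi>2 j (t (n+1)) = 0"
    and phin2: "(\<forall>i\<in>{1..n+1}. \<phi> (n+2) (t i) = 0) \<and> \<phi>2 (n+2) (t 1) = 0 \<and> \<phi>2 (n+2) (t (n+1)) = 1"
    and c_eq: "\<forall>k\<in>{1..n+3}. \<forall>l\<in>{1..n+3}.
                 c k l = integral {t 1..t (n+1)} (\<lambda>x. \<phi>2 (k-1) x * \<phi>2 (l-1) x)"
begin

lemma first_knot_less_last: "t 1 < t (n+1)"
proof -
  have "t 1 < t (Suc 1)" using t_incr n_pos by auto
  also have "\<dots> \<le> t (n+1)" using knots_mono[OF t_incr, of "Suc 1" "n+1"] n_pos by simp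
  finally show ?thesis .
qed

lemma knot_mem_interval: "i \<in> {1..n+1} \<Longrightarrow> t i \<in> {t 1..t (n+1)}"
  using knots_mono[OF t_incr, of 1 i] knots_mono[OF t_incr, of i "n+1"] by auto

lemma continuous_on_basis2:
  assumes "k \<le> n+2"
  shows "continuous_on {t 1..t (n+1)} (\<phi>2 k)"
proof -
  obtain s2 where s2: "has_second_deriv_on (t 1) (t (n+1)) (\<phi> k) s2" "continuous_on {t 1..t (n+1)} s2"
    using spl assms unfolding cubic_spline_C2_def C2_on_def by blast
  have "\<phi>2 k x = s2 x" if "x \<in> {t 1..t (n+1)}" for x
    using has_second_deriv_on_unique[OF first_knot_less_last _ s2(1) _ that] d2 assms by blast
  then show ?thesis using s2(2) continuous_on_cong by blast
qed

lemma piecewise_affine_basis2: "k \<le> n+2 \<Longrightarrow> piecewise_affine n t (\<phi>2 k)"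
  using cubic_spline_second_deriv_piecewise_affine[OF t_incr] spl d2 by blast

definition spline :: "real \<Rightarrow> real \<Rightarrow> (nat \<Rightarrow> real) \<Rightarrow> real \<Rightarrow> real" where
  "spline u v p x = u * \<phi> 0 x + (\<Sum>j=1..n+1. p j * \<phi> j x) + v * \<phi> (n+2) x"

definition spline2 :: "real \<Rightarrow> real \<Rightarrow> (nat \<Rightarrow> real) \<Rightarrow> real \<Rightarrow> real" where
  "spline2 u v p x = u * \<phi>2 0 x + (\<Sum>j=1..n+1. p j * \<phi>2 j x) + v * \<phi>2 (n+2) x"

lemma has_second_deriv_spline:
  "has_second_deriv_on (t 1) (t (n+1)) (spline u v p) (spline2 u v p)"
  unfolding spline_def[abs_def] spline2_def[abs_def] using d2
  by (intro has_second_deriv_on_add has_second_deriv_on_cmult has_second_deriv_on_sum) auto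

lemma continuous_on_spline2: "continuous_on {t 1..t (n+1)} (spline2 u v p)"
  unfolding spline2_def[abs_def] using continuous_on_basis2 by (intro continuous_intros) auto

lemma piecewise_affine_spline2: "piecewise_affine n t (spline2 u v p)"
  unfolding spline2_def[abs_def] using piecewise_affine_basis2
  by (intro piecewise_affine_add piecewise_affine_cmult piecewise_affine_sum) auto

lemma spline2_eq_sum_bordered: "spline2 u v p x = (\<Sum>k=1..n+3. bordered n u v p k * \<phi>2 (k-1) x)"
  unfolding spline2_def sum_bordered by simp

lemma spline_at_knot:
  assumes "i \<in> {1..n+1}"
  shows "spline u v p (t i) = p i"
proof -
  have "(\<Sum>j=1..n+1. p j * \<phi> j (t i)) = (\<Sum>j=1..n+1. if j = i then p j else 0)"
    using phij assms by (intro sum.cong) auto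
  then show ?thesis unfolding spline_def using phi0 phin2 assms by simp
qed

lemma spline2_at_ends: "spline2 u v p (t 1) = u" "spline2 u v p (t (n+1)) = v"
  unfolding spline2_def using phi0 phij phin2 by auto

lemma gram_eq_integral:
  "(\<Sum>k=1..n+3. \<Sum>l=1..n+3. w k * c k l * w l) =
   integral {t 1..t (n+1)} (\<lambda>x. (\<Sum>k=1..n+3. w k * \<phi>2 (k-1) x)\<^sup>2)"
  using continuous_on_basis2 c_eq by (subst integral_square_of_sum) auto

lemma bordered_gram_eq_integral:
  "(\<Sum>k=1..n+3. \<Sum>l=1..n+3. bordered n u v p k * c k l * bordered n u v p l) =
   integral {t 1..t (n+1)} (\<lambda>x. (spline2 u v p x)\<^sup>2)"
  unfolding gram_eq_integral spline2_eq_sum_bordered ..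

lemma gram_sym: "k \<in> {1..n+3} \<Longrightarrow> l \<in> {1..n+3} \<Longrightarrow> c k l = c l k"
  using c_eq by (simp add: mult.commute)

lemma gram_nonneg: "0 \<le> (\<Sum>k=1..n+3. \<Sum>l=1..n+3. w k * c k l * w l)"
  unfolding gram_eq_integral using continuous_on_basis2
  by (intro integral_nonneg integrable_continuous_interval continuous_intros) auto

lemma spline2_square_integral_eq_0_imp:
  assumes "integral {t 1..t (n+1)} (\<lambda>x. (spline2 u v p x)\<^sup>2) = 0"
  shows "u = 0 \<and> v = 0 \<and> (\<exists>a b. \<forall>i\<in>{1..n+1}. p i = a + b * t i)"
proof -
  have zero: "spline2 u v p x = 0" if "x \<in> {t 1..t (n+1)}" for x
    using continuous_integral_square_eq_0[OF first_knot_less_last continuous_on_spline2 assms that] .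
  have "u = 0" "v = 0"
    using zero[of "t 1"] zero[of "t (n+1)"] spline2_at_ends[of u v p] first_knot_less_last by auto
  moreover obtain a b where ab: "\<forall>x\<in>{t 1..t (n+1)}. spline u v p x = a + b * x"
    using has_second_deriv_on_zero_imp_affine[OF has_second_deriv_spline zero] by blast
  have "p i = a + b * t i" if "i \<in> {1..n+1}" for i
    using ab knot_mem_interval[OF that] spline_at_knot[OF that, of u v p] by simp
  ultimately show ?thesis by blast
qed

lemma spline2_orthogonal_piecewise_affine:
  assumes p: "\<forall>i\<in>{1..n+1}. p i = a + b * t i"
    and g: "piecewise_affine n t g" "g (t 1) = 0" "g (t (n+1)) = 0"
  shows "integral {t 1..t (n+1)} (\<lambda>x. spline2 0 0 p x * g x) = 0"
proof -
  have "\<forall>i\<in>{1..n+1}. spline 0 0 p (t i) - (a + b * t i) = 0"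
    using p spline_at_knot by simp
  then have "((\<lambda>x. (spline2 0 0 p x - 0) * g x) has_integral 0) {t 1..t (n+1)}"
    by (rule has_integral_second_deriv_mult_piecewise_affine[OF t_incr
        has_second_deriv_on_diff[OF has_second_deriv_spline has_second_deriv_on_affine] _ g])
  then show ?thesis by (simp add: integral_unique)
qed

lemma bordered_gram_eq_0_iff:
  "(\<Sum>k=1..n+3. \<Sum>l=1..n+3. bordered n u v p k * c k l * bordered n u v p l) = 0 \<longleftrightarrow>
   u = 0 \<and> v = 0 \<and> (\<exists>a b. \<forall>i\<in>{1..n+1}. p i = a + b * t i)"
proof
  assume "(\<Sum>k=1..n+3. \<Sum>l=1..n+3. bordered n u v p k * c k l * bordered n u v p l) = 0"
  then show "u = 0 \<and> v = 0 \<and> (\<exists>a b. \<forall>i\<in>{1..n+1}. p i = a + b * t i)"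
    unfolding bordered_gram_eq_integral by (rule spline2_square_integral_eq_0_imp)
next
  assume "u = 0 \<and> v = 0 \<and> (\<exists>a b. \<forall>i\<in>{1..n+1}. p i = a + b * t i)"
  then obtain a b where "u = 0" "v = 0" and ab: "\<forall>i\<in>{1..n+1}. p i = a + b * t i" by blast
  moreover have "integral {t 1..t (n+1)} (\<lambda>x. spline2 0 0 p x * spline2 0 0 p x) = 0"
    by (rule spline2_orthogonal_piecewise_affine[OF ab piecewise_affine_spline2 spline2_at_ends])
  ultimately show "(\<Sum>k=1..n+3. \<Sum>l=1..n+3. bordered n u v p k * c k l * bordered n u v p l) = 0"
    unfolding bordered_gram_eq_integral by (simp add: power2_eq_square)
qed

lemma gram_border_zero:
  assumes "j \<in> {1..n+1}"
  shows "c 1 (j+1) = 0 \<and> c (n+3) (j+1) = 0"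
proof -
  have g: "piecewise_affine n t (\<phi>2 j)" "\<phi>2 j (t 1) = 0" "\<phi>2 j (t (n+1)) = 0"
    using piecewise_affine_basis2 phij assms by auto
  have "((\<lambda>x. \<phi>2 0 x * \<phi>2 j x) has_integral 0) {t 1..t (n+1)}"
    by (rule has_integral_second_deriv_mult_piecewise_affine[OF t_incr _ _ g]) (use d2 phi0 in auto)
  moreover have "((\<lambda>x. \<phi>2 (n+2) x * \<phi>2 j x) has_integral 0) {t 1..t (n+1)}"
    by (rule has_integral_second_deriv_mult_piecewise_affine[OF t_incr _ _ g]) (use d2 phin2 in auto)
  ultimately
  show ?thesis using c_eq assms by (simp add: integral_unique)
qed

lemma bordered_gram_block:
  "(\<Sum>k=1..n+3. \<Sum>l=1..n+3. bordered n u v p k * c k l * bordered n u v p l) =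
   u\<^sup>2 * c 1 1 + v\<^sup>2 * c (n+3) (n+3) + 2 * c 1 (n+3) * u * v +
   (\<Sum>i=1..n+1. \<Sum>j=1..n+1. p i * c (i+1) (j+1) * p j)"
proof (rule bordered_quadratic_form_block)
  show "\<forall>j\<in>{1..n+1}. c 1 (j+1) = 0 \<and> c (n+3) (j+1) = 0 \<and> c (j+1) 1 = 0 \<and> c (j+1) (n+3) = 0"
    using gram_border_zero gram_sym by force
  show "c (n+3) 1 = c 1 (n+3)" using gram_sym by force
qed

lemma corner_positive_definite:
  assumes "(x, y) \<noteq> (0, 0)"
  shows "x * c 1 1 * x + x * c 1 (n+3) * y + y * c (n+3) 1 * x + y * c (n+3) (n+3) * y > 0"
proof -
  let ?Q = "\<Sum>k=1..n+3. \<Sum>l=1..n+3. bordered n x y (\<lambda>_. 0) k * c k l * bordered n x y (\<lambda>_. 0) l"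
  have "x * c 1 1 * x + x * c 1 (n+3) * y + y * c (n+3) 1 * x + y * c (n+3) (n+3) * y = ?Q"
    unfolding bordered_gram_block using gram_sym[of "n+3" 1]
    by (simp add: power2_eq_square algebra_simps)
  moreover have "?Q \<ge> 0" by (rule gram_nonneg)
  moreover have "?Q \<noteq> 0" using assms bordered_gram_eq_0_iff by auto
  ultimately show ?thesis by linarith
qed

lemma middle_row_eq_integral:
  assumes "i \<in> {1..n+1}"
  shows "(\<Sum>j=1..n+1. c (i+1) (j+1) * p j) = integral {t 1..t (n+1)} (\<lambda>x. spline2 0 0 p x * \<phi>2 i x)"
proof -
  have "integral {t 1..t (n+1)} (\<lambda>x. spline2 0 0 p x * \<phi>2 i x) =
        integral {t 1..t (n+1)} (\<lambda>x. \<Sum>j=1..n+1. p j * (\<phi>2 j x * \<phi>2 i x))"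
    by (simp only: spline2_def sum_distrib_right mult.assoc mult_zero_left add_0 add_0_right)
  also have "\<dots> = (\<Sum>j=1..n+1. integral {t 1..t (n+1)} (\<lambda>x. p j * (\<phi>2 j x * \<phi>2 i x)))"
    using continuous_on_basis2 assms
    by (intro integral_sum integrable_continuous_interval continuous_intros) auto
  also have "\<dots> = (\<Sum>j=1..n+1. c (i+1) (j+1) * p j)"
    using c_eq assms by (intro sum.cong) (auto simp: mult.commute)
  finally show ?thesis ..
qed

lemma middle_block_null_space:
  "(\<forall>i\<in>{1..n+1}. (\<Sum>j=1..n+1. c (i+1) (j+1) * p j) = 0) \<longleftrightarrow>
   (\<exists>a b. \<forall>i\<in>{1..n+1}. p i = a + b * t i)"
proof
  assume rows: "\<forall>i\<in>{1..n+1}. (\<Sum>j=1..n+1. c (i+1) (j+1) * p j) = 0"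
  have "(\<Sum>i=1..n+1. \<Sum>j=1..n+1. p i * c (i+1) (j+1) * p j) =
        (\<Sum>i=1..n+1. p i * (\<Sum>j=1..n+1. c (i+1) (j+1) * p j))"
    by (simp only: sum_distrib_left mult.assoc)
  also have "\<dots> = 0" using rows by simp
  finally have "(\<Sum>k=1..n+3. \<Sum>l=1..n+3. bordered n 0 0 p k * c k l * bordered n 0 0 p l) = 0"
    unfolding bordered_gram_block by simp
  then show "\<exists>a b. \<forall>i\<in>{1..n+1}. p i = a + b * t i"
    unfolding bordered_gram_eq_0_iff by blast
next
  assume "\<exists>a b. \<forall>i\<in>{1..n+1}. p i = a + b * t i"
  then obtain a b where ab: "\<forall>i\<in>{1..n+1}. p i = a + b * t i" by blast
  show "\<forall>i\<in>{1..n+1}. (\<Sum>j=1..n+1. c (i+1) (j+1) * p j) = 0"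
  proof
    fix i assume i: "i \<in> {1..n+1}"
    have "piecewise_affine n t (\<phi>2 i)" "\<phi>2 i (t 1) = 0" "\<phi>2 i (t (n+1)) = 0"
      using piecewise_affine_basis2 phij i by auto
    then show "(\<Sum>j=1..n+1. c (i+1) (j+1) * p j) = 0"
      unfolding middle_row_eq_integral[OF i] by (rule spline2_orthogonal_piecewise_affine[OF ab])
  qed
qed

lemma integral_second_deriv_square:
  assumes "has_second_deriv_on (t 1) (t (n+1))
             (\<lambda>x. u * \<phi> 0 x + (\<Sum>j=1..n+1. p j * \<phi> j x) + v * \<phi> (n+2) x) s2"
  shows "integral {t 1..t (n+1)} (\<lambda>x. \<bar>s2 x\<bar>^2) =
         u\<^sup>2 * c 1 1 + v\<^sup>2 * c (n+3) (n+3) + 2 * c 1 (n+3) * u * v +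
         (\<Sum>i=1..n+1. \<Sum>j=1..n+1. p i * c (i+1) (j+1) * p j)"
proof -
  have "s2 x = spline2 u v p x" if "x \<in> {t 1..t (n+1)}" for x
    using has_second_deriv_on_unique[OF first_knot_less_last assms has_second_deriv_spline _ that]
    by (simp add: spline_def)
  then have "integral {t 1..t (n+1)} (\<lambda>x. \<bar>s2 x\<bar>^2) = integral {t 1..t (n+1)} (\<lambda>x. (spline2 u v p x)\<^sup>2)"
    by (intro integral_cong) simp
  then show ?thesis by (simp only: bordered_gram_eq_integral[symmetric] bordered_gram_block)
qed

end

theorem proposition2:
  fixes n :: nat and t :: "nat \<Rightarrow> real"
    and \<phi> :: "nat \<Rightarrow> real \<Rightarrow> real" and \<phi>2 :: "nat \<Rightarrow> real \<Rightarrow> real"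
    and c :: "nat \<Rightarrow> nat \<Rightarrow> real"
  assumes n: "n \<ge> 1"
    and t_incr: "\<forall>i\<in>{1..n}. t i < t (Suc i)"
    and spl: "\<forall>k\<le>n+2. cubic_spline_C2 n t (\<phi> k)"
    and d2: "\<forall>k\<le>n+2. has_second_deriv_on (t 1) (t (n+1)) (\<phi> k) (\<phi>2 k)"
    and phi0: "(\<forall>i\<in>{1..n+1}. \<phi> 0 (t i) = 0) \<and> \<phi>2 0 (t 1) = 1 \<and> \<phi>2 0 (t (n+1)) = 0"
    and phij: "\<forall>j\<in>{1..n+1}. (\<forall>i\<in>{1..n+1}. \<phi> j (t i) = (if i = j then 1 else 0))
                 \<and> \<phi>2 j (t 1) = 0 \<and> \<phi>2 j (t (n+1)) = 0"
    and phin2: "(\<forall>i\<in>{1..n+1}. \<phi> (n+2) (t i) = 0) \<and> \<phi>2 (n+2) (t 1) = 0 \<and> \<phi>2 (n+2) (t (n+1)) = 1"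
    and c_def: "\<forall>k\<in>{1..n+3}. \<forall>l\<in>{1..n+3}.
                 c k l = integral {t 1..t (n+1)} (\<lambda>x. \<phi>2 (k-1) x * \<phi>2 (l-1) x)"
  shows "
    ((\<forall>k\<in>{1..n+3}. \<forall>l\<in>{1..n+3}. c k l = c l k) \<and>
     (\<forall>v :: nat \<Rightarrow> real. (\<Sum>k=1..n+3. \<Sum>l=1..n+3. v k * c k l * v l) \<ge> 0)) \<and>
    (\<forall>u1 un1 :: real. \<forall>p :: nat \<Rightarrow> real.
       (let w = (\<lambda>k. if k = 1 then u1 else if k = n+3 then un1 else p (k-1))
        in (\<Sum>k=1..n+3. \<Sum>l=1..n+3. w k * c k l * w l) = 0)
       \<longleftrightarrow> (u1 = 0 \<and> un1 = 0 \<and> (\<exists>a b. \<forall>i\<in>{1..n+1}. p i = a + b * t i))) \<and>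
    (\<forall>j\<in>{1..n+1}. c 1 (j+1) = 0 \<and> c (n+3) (j+1) = 0) \<and>
    (c 1 (n+3) = c (n+3) 1 \<and>
     (\<forall>x y :: real. (x, y) \<noteq> (0, 0) \<longrightarrow>
        x * c 1 1 * x + x * c 1 (n+3) * y + y * c (n+3) 1 * x + y * c (n+3) (n+3) * y > 0)) \<and>
    (\<forall>p :: nat \<Rightarrow> real.
       (\<forall>i\<in>{1..n+1}. (\<Sum>j=1..n+1. c (i+1) (j+1) * p j) = 0)
       \<longleftrightarrow> (\<exists>a b. \<forall>i\<in>{1..n+1}. p i = a + b * t i)) \<and>
    (\<forall>u1 un1 :: real. \<forall>p :: nat \<Rightarrow> real. \<forall>s2.
       has_second_deriv_on (t 1) (t (n+1))
         (\<lambda>x. u1 * \<phi> 0 x + (\<Sum>j=1..n+1. p j * \<phi> j x) + un1 * \<phi> (n+2) x) s2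
       \<longrightarrow> integral {t 1..t (n+1)} (\<lambda>x. \<bar>s2 x\<bar>^2) =
           u1^2 * c 1 1 + un1^2 * c (n+3) (n+3) + 2 * c 1 (n+3) * u1 * un1 +
           (\<Sum>i=1..n+1. \<Sum>j=1..n+1. p i * c (i+1) (j+1) * p j))"
proof -
  interpret natural_spline_basis n t \<phi> \<phi>2 c
    by unfold_locales (fact assms)+
  show ?thesis
    unfolding Let_def
    by (intro conjI allI ballI impI gram_sym gram_nonneg bordered_gram_eq_0_iff[unfolded bordered_def]
        gram_border_zero[THEN conjunct1] gram_border_zero[THEN conjunct2] corner_positive_definite
        middle_block_null_space integral_second_deriv_square) auto
qed

end
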